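(* Let $|q|<1$, let $x,y$ be complex numbers and let $n,m\ge 0$ be integers. Then $$\sum_{k=0}^{\min\{n,m\}}{n\brack k}{m\brack k}(q;q)_k\,x^k\,h_{n+m-2k}(x|q)=\left(\sum_{k=0}^n{n\brack k}y^k\,h_{n-k}(x,y|q)\right)\left(\sum_{j=0}^m{m\brack j}y^j\,h_{m-j}(x,y|q)\right).$$
   Context: Throughout $|q|<1$. $(a;q)_n=\prod_{j=0}^{n-1}(1-aq^j)$, ${n\brack k}=\frac{(q;q)_n}{(q;q)_k(q;q)_{n-k}}$. The Rogers–Szegő polynomials are $h_n(x|q)=\sum_{k=0}^n{n\brack k}x^k$. $P_n(x,y)=(x-y)(x-qy)\cdots(x-q^{n-1}y)$ with $P_0=1$, and the bivariate Rogers–Szegő polynomials are $h_n(x,y|q)=\sum_{k=0}^n{n\brack k}P_k(x,y)$. *)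

theory Defs
  imports Complex_Main
begin

definition qpoch :: "complex \<Rightarrow> complex \<Rightarrow> nat \<Rightarrow> complex" where
  "qpoch a q n = (\<Prod>j<n. 1 - a * q ^ j)"

definition qbinom :: "complex \<Rightarrow> nat \<Rightarrow> nat \<Rightarrow> complex" where
  "qbinom q n k = qpoch q q n / (qpoch q q k * qpoch q q (n - k))"

definition rs :: "complex \<Rightarrow> nat \<Rightarrow> complex \<Rightarrow> complex" where
  "rs q n x = (\<Sum>k=0..n. qbinom q n k * x ^ k)"

definition Pq :: "complex \<Rightarrow> nat \<Rightarrow> complex \<Rightarrow> complex \<Rightarrow> complex" where
  "Pq q n x y = (\<Prod>j<n. x - q ^ j * y)"

definition rs2 :: "complex \<Rightarrow> nat \<Rightarrow> complex \<Rightarrow> complex \<Rightarrow> complex" where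
  "rs2 q n x y = (\<Sum>k=0..n. qbinom q n k * Pq q k x y)"

end

theory Submission
  imports Defs
begin

(* Both factors on the right are h_n(x) and h_m(x): expanding h_{n-k}(x,y) and regrouping by
   s = k + i turns the sum into sum_s [n,s] x^s, by the q-binomial expansion
   x^s = sum_k [s,k] y^k P_{s-k}(x,y).  What remains is the linearization formula
   h_n h_m = sum_k [n,k] [m,k] (q;q)_k x^k h_{n+m-2k}, proved by induction on m: both sides obey
   the recurrence h_{m+1} = (1 + x) h_m - x (1 - q^m) h_{m-1}, and on the right this reduces to the
   Pascal-type identity for the coefficients.  The hypothesis |q| < 1 only serves to make q not a
   root of unity, so that the Gaussian coefficients are genuine quotients. *)

(* qbinom q n k is junk for n < k, because of the truncated subtraction n - k. *)
definition qbinomial :: "complex \<Rightarrow> nat \<Rightarrow> nat \<Rightarrow> complex" where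
  "qbinomial q n k = (if k \<le> n then qbinom q n k else 0)"

lemma qbinomial_eq_0: "n < k \<Longrightarrow> qbinomial q n k = 0"
  by (simp add: qbinomial_def)

lemma qpoch_0 [simp]: "qpoch a q 0 = 1"
  by (simp add: qpoch_def)

lemma qpoch_self_Suc: "qpoch q q (Suc n) = qpoch q q n * (1 - q ^ Suc n)"
  by (simp add: qpoch_def)

lemma Pq_Suc: "Pq q (Suc j) x y = Pq q j x y * (x - q ^ j * y)"
  by (simp add: Pq_def)

lemma rs_0 [simp]: "rs q 0 x = 1"
  by (simp add: rs_def qbinom_def)

lemma rs_eq_sum_qbinomial: "n \<le> K \<Longrightarrow> rs q n x = (\<Sum>k\<le>K. qbinomial q n k * x ^ k)"
  unfolding rs_def atLeast0AtMost
  by (rule sum.mono_neutral_cong_left) (auto simp: qbinomial_def)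

lemma rs2_eq_sum_qbinomial: "rs2 q n x y = (\<Sum>k\<le>n. qbinomial q n k * Pq q k x y)"
  unfolding rs2_def atLeast0AtMost by (rule sum.cong) (auto simp: qbinomial_def)

definition rs_lin_coeff :: "complex \<Rightarrow> nat \<Rightarrow> nat \<Rightarrow> nat \<Rightarrow> complex" where
  "rs_lin_coeff q n m k = qbinomial q n k * qbinomial q m k * qpoch q q k"

definition rs_linearization :: "complex \<Rightarrow> nat \<Rightarrow> nat \<Rightarrow> complex \<Rightarrow> complex" where
  "rs_linearization q n m x = (\<Sum>k\<le>m. rs_lin_coeff q n m k * x ^ k * rs q (n + m - 2 * k) x)"

lemma rs_lin_coeff_eq_0: "n < k \<or> m < k \<Longrightarrow> rs_lin_coeff q n m k = 0"
  by (auto simp: rs_lin_coeff_def qbinomial_eq_0)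

context
  fixes q :: complex
  assumes not_root_of_unity: "\<And>j. 0 < j \<Longrightarrow> q ^ j \<noteq> 1"
begin

lemma qpoch_nonzero: "qpoch q q n \<noteq> 0"
  using not_root_of_unity by (induction n) (simp_all add: qpoch_self_Suc del: power_Suc)

lemma qbinomial_closed_form:
  "k \<le> n \<Longrightarrow> qbinomial q n k = qpoch q q n / (qpoch q q k * qpoch q q (n - k))"
  by (simp add: qbinomial_def qbinom_def)

lemma qbinomial_0_right [simp]: "qbinomial q n 0 = 1"
  by (simp add: qbinomial_closed_form qpoch_nonzero)

lemma qbinomial_Suc_Suc:
  "qbinomial q (Suc n) (Suc k) = qbinomial q n (Suc k) + q ^ (n - k) * qbinomial q n k"
proof (cases "k < n")
  case True
  then obtain d where d: "n - k = Suc d" "n - Suc k = d" "Suc n - Suc k = Suc d"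
    by (metis Suc_diff_Suc diff_Suc_Suc)
  \<comment> \<open>Abbreviating the factors lets field_simps see that the denominators are nonzero.\<close>
  define P A B U V where "P = qpoch q q n" and "A = qpoch q q k" and "B = qpoch q q d"
    and "U = 1 - q ^ Suc k" and "V = 1 - q ^ Suc d"
  have nonzero: "A \<noteq> 0" "B \<noteq> 0" "U \<noteq> 0" "V \<noteq> 0"
    unfolding A_def B_def U_def V_def
    by (simp_all add: qpoch_nonzero not_root_of_unity del: power_Suc)
  have "Suc n = Suc k + Suc d"
    using d by simp
  then have "1 - q ^ Suc n = 1 - (1 - U) * (1 - V)"
    unfolding U_def V_def by (simp only: power_add) simp
  moreover have "q ^ (n - k) = 1 - V"
    using d by (simp add: V_def)
  ultimately have closed_forms:
    "qbinomial q (Suc n) (Suc k) = P * (1 - (1 - U) * (1 - V)) / (A * U * (B * V))"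
    "qbinomial q n (Suc k) = P / (A * U * B)"
    "q ^ (n - k) * qbinomial q n k = (1 - V) * (P / (A * (B * V)))"
    using True d
    by (simp_all add: qbinomial_closed_form qpoch_self_Suc P_def A_def B_def U_def V_def
        del: power_Suc)
  show ?thesis
    unfolding closed_forms using nonzero by (simp add: field_simps)
next
  case False
  then show ?thesis
    by (cases "k = n") (simp_all add: qbinomial_def qbinom_def qpoch_nonzero)
qed

lemma qbinomial_pred_left_eq:
  "(1 - q ^ n) * qbinomial q (n - 1) k = (1 - q ^ (n - k)) * qbinomial q n k"
proof (cases n)
  case (Suc n')
  show ?thesis
  proof (cases "k \<le> n'")
    case True
    then have "Suc n' - k = Suc (n' - k)"
      by simp
    with True show ?thesis
      using Suc qpoch_nonzero[of k] qpoch_nonzero[of "n' - k"] not_root_of_unity[of "Suc (n' - k)"]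
      by (simp add: qbinomial_closed_form qpoch_self_Suc field_simps del: power_Suc)
  next
    case False
    then show ?thesis
      using Suc by (cases "k = n") (simp_all add: qbinomial_eq_0)
  qed
qed simp

lemma qbinomial_Suc_right_eq:
  "(1 - q ^ Suc k) * qbinomial q n (Suc k) = (1 - q ^ (n - k)) * qbinomial q n k"
proof (cases "k < n")
  case True
  then have "n - k = Suc (n - Suc k)"
    by simp
  with True show ?thesis
    using qpoch_nonzero[of k] qpoch_nonzero[of "n - Suc k"]
      not_root_of_unity[of "Suc k"] not_root_of_unity[of "Suc (n - Suc k)"]
    by (simp add: qbinomial_closed_form qpoch_self_Suc field_simps del: power_Suc)
qed (simp add: qbinomial_eq_0)

lemma qbinomial_mult:
  "qbinomial q n k * qbinomial q (n - k) j = qbinomial q n (k + j) * qbinomial q (k + j) k"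
proof (cases "k + j \<le> n")
  case True
  then have "n - k - j = n - (k + j)"
    by simp
  with True show ?thesis
    using qpoch_nonzero[of k] qpoch_nonzero[of j] qpoch_nonzero[of "n - k"]
      qpoch_nonzero[of "k + j"] qpoch_nonzero[of "n - (k + j)"]
    by (simp add: qbinomial_closed_form field_simps)
next
  case False
  then show ?thesis
    by (cases "k \<le> n") (simp_all add: qbinomial_eq_0)
qed

lemma power_eq_sum_Pq: "x ^ s = (\<Sum>k\<le>s. qbinomial q s k * y ^ k * Pq q (s - k) x y)"
proof (induction s)
  case (Suc s)
  define f where "f k = qbinomial q s k * y ^ k" for k
  have "x ^ Suc s = (\<Sum>k\<le>s. f k * Pq q (Suc s - k) x y)
      + (\<Sum>k\<le>s. q ^ (s - k) * f k * y * Pq q (s - k) x y)"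
  proof -
    have "x * (f k * Pq q (s - k) x y) = f k * Pq q (Suc s - k) x y + q ^ (s - k) * f k * y * Pq q (s - k) x y"
      if "k \<le> s" for k
      using that by (simp add: Pq_Suc Suc_diff_le algebra_simps)
    then show ?thesis
      by (simp add: Suc.IH sum_distrib_left f_def mult.assoc flip: sum.distrib)
  qed
  also have "(\<Sum>k\<le>s. f k * Pq q (Suc s - k) x y)
      = Pq q (Suc s) x y + (\<Sum>k\<le>s. f (Suc k) * Pq q (s - k) x y)"
  proof -
    have "(\<Sum>k\<le>s. f k * Pq q (Suc s - k) x y) = (\<Sum>k\<le>Suc s. f k * Pq q (Suc s - k) x y)"
      by (simp add: f_def qbinomial_eq_0)
    then show ?thesis
      unfolding sum.atMost_Suc_shift by (simp add: f_def)
  qed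
  also have "Pq q (Suc s) x y + (\<Sum>k\<le>s. f (Suc k) * Pq q (s - k) x y)
      + (\<Sum>k\<le>s. q ^ (s - k) * f k * y * Pq q (s - k) x y)
      = (\<Sum>k\<le>Suc s. qbinomial q (Suc s) k * y ^ k * Pq q (Suc s - k) x y)"
    unfolding sum.atMost_Suc_shift
    by (simp add: f_def qbinomial_Suc_Suc sum.distrib algebra_simps)
  finally show ?case .
qed (simp add: Pq_def)

lemma sum_qbinom_rs2_eq_rs: "(\<Sum>k=0..n. qbinom q n k * y ^ k * rs2 q (n - k) x y) = rs q n x"
proof -
  define g where "g k i = qbinomial q n k * y ^ k * (qbinomial q (n - k) i * Pq q i x y)" for k i
  have "(\<Sum>k=0..n. qbinom q n k * y ^ k * rs2 q (n - k) x y) = (\<Sum>k\<le>n. \<Sum>i\<le>n - k. g k i)"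
    unfolding atLeast0AtMost g_def rs2_eq_sum_qbinomial sum_distrib_left
    by (intro sum.cong refl) (simp add: qbinomial_def)
  also have "\<dots> = (\<Sum>(k, i)\<in>{(k, i). k + i \<le> n}. g k i)"
  proof -
    have "Sigma {..n} (\<lambda>k. {..n - k}) = {(k, i). k + i \<le> n}"
      by auto
    then show ?thesis
      by (simp add: sum.Sigma)
  qed
  also have "\<dots> = (\<Sum>s\<le>n. \<Sum>k\<le>s. g k (s - k))"
    by (rule sum.triangle_reindex_eq)
  also have "\<dots> = (\<Sum>s\<le>n. qbinomial q n s * x ^ s)"
  proof (intro sum.cong refl)
    fix s
    have "g k (s - k) = qbinomial q n s * (qbinomial q s k * y ^ k * Pq q (s - k) x y)" if "k \<le> s" for k
      using that qbinomial_mult[of n k "s - k"] by (simp add: g_def mult_ac)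
    then show "(\<Sum>k\<le>s. g k (s - k)) = qbinomial q n s * x ^ s"
      by (simp add: power_eq_sum_Pq[of x s y] sum_distrib_left)
  qed
  also have "\<dots> = rs q n x"
    by (simp add: rs_eq_sum_qbinomial[of n n])
  finally show ?thesis .
qed

(* For n = 0 the truncated n - 1 is harmless, as its coefficient 1 - q ^ 0 vanishes. *)
lemma rs_Suc: "rs q (Suc n) x = (1 + x) * rs q n x - x * (1 - q ^ n) * rs q (n - 1) x"
proof -
  have "rs q (Suc n) x = 1 + (\<Sum>k\<le>n. qbinomial q (Suc n) (Suc k) * x ^ Suc k)"
    unfolding rs_eq_sum_qbinomial[of "Suc n" "Suc n", OF order_refl] sum.atMost_Suc_shift by simp
  also have "\<dots> = (1 + (\<Sum>k\<le>n. qbinomial q n (Suc k) * x ^ Suc k))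
      + x * (\<Sum>k\<le>n. q ^ (n - k) * qbinomial q n k * x ^ k)"
    by (simp add: qbinomial_Suc_Suc sum_distrib_left algebra_simps flip: sum.distrib)
  also have "1 + (\<Sum>k\<le>n. qbinomial q n (Suc k) * x ^ Suc k) = rs q n x"
    unfolding rs_eq_sum_qbinomial[of n "Suc n", OF le_SucI[OF order_refl]] sum.atMost_Suc_shift
    by simp
  also have "(\<Sum>k\<le>n. q ^ (n - k) * qbinomial q n k * x ^ k)
      = rs q n x - (\<Sum>k\<le>n. (1 - q ^ (n - k)) * qbinomial q n k * x ^ k)"
    unfolding rs_eq_sum_qbinomial[of n n, OF order_refl] sum_subtractf[symmetric]
    by (rule sum.cong) (simp_all add: algebra_simps)
  also have "(\<Sum>k\<le>n. (1 - q ^ (n - k)) * qbinomial q n k * x ^ k) = (1 - q ^ n) * rs q (n - 1) x"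
    unfolding rs_eq_sum_qbinomial[of "n - 1" n, OF diff_le_self] sum_distrib_left
    by (intro sum.cong refl) (metis qbinomial_pred_left_eq mult.assoc)
  finally show ?thesis
    by (simp add: algebra_simps)
qed

lemma rs_lin_coeff_0 [simp]: "rs_lin_coeff q n m 0 = 1"
  by (simp add: rs_lin_coeff_def)

lemma rs_lin_coeff_pred_eq:
  "(1 - q ^ m) * rs_lin_coeff q n (m - 1) k = (1 - q ^ (m - k)) * rs_lin_coeff q n m k"
  unfolding rs_lin_coeff_def by (metis qbinomial_pred_left_eq mult.assoc mult.left_commute)

lemma rs_lin_coeff_Suc_Suc:
  "rs_lin_coeff q n (Suc m) (Suc k)
    = rs_lin_coeff q n m (Suc k) + q ^ (m - k) * (1 - q ^ (n - k)) * rs_lin_coeff q n m k"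
proof -
  have "rs_lin_coeff q n (Suc m) (Suc k)
      = rs_lin_coeff q n m (Suc k) + q ^ (m - k) * qbinomial q m k * qpoch q q k
          * ((1 - q ^ Suc k) * qbinomial q n (Suc k))"
    by (simp add: rs_lin_coeff_def qbinomial_Suc_Suc qpoch_self_Suc algebra_simps del: power_Suc)
  then show ?thesis
    unfolding qbinomial_Suc_right_eq by (simp add: rs_lin_coeff_def mult_ac)
qed

lemma rs_linearization_0 [simp]: "rs_linearization q n 0 x = rs q n x"
  by (simp add: rs_linearization_def)

lemma rs_linearization_pred:
  "(1 - q ^ m) * rs_linearization q n (m - 1) x
    = (\<Sum>k\<le>m. (1 - q ^ (m - k)) * rs_lin_coeff q n m k * x ^ k * rs q (n + m - 2 * k - 1) x)"
proof (cases m)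
  case (Suc m')
  have "(1 - q ^ m) * rs_linearization q n (m - 1) x
      = (\<Sum>k\<le>m - 1. (1 - q ^ (m - k)) * rs_lin_coeff q n m k * x ^ k * rs q (n + m - 2 * k - 1) x)"
    unfolding rs_linearization_def sum_distrib_left
  proof (intro sum.cong refl)
    fix k
    have "n + (m - 1) - 2 * k = n + m - 2 * k - 1"
      using Suc by simp
    then show "(1 - q ^ m) * (rs_lin_coeff q n (m - 1) k * x ^ k * rs q (n + (m - 1) - 2 * k) x)
        = (1 - q ^ (m - k)) * rs_lin_coeff q n m k * x ^ k * rs q (n + m - 2 * k - 1) x"
      using rs_lin_coeff_pred_eq[of m n k] Suc by (simp add: mult.assoc)
  qed
  then show ?thesis
    using Suc by simp
qed simp

lemma rs_linearization_Suc:
  "rs_linearization q n (Suc m) x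
    = (1 + x) * rs_linearization q n m x - x * (1 - q ^ m) * rs_linearization q n (m - 1) x"
proof -
  define N where "N = n + m"
  define a where "a k = rs_lin_coeff q n m k" for k
  have summand: "(1 + x) * (a k * x ^ k * rs q (N - 2 * k) x)
        - x * ((1 - q ^ (m - k)) * a k * x ^ k * rs q (N - 2 * k - 1) x)
      = a k * x ^ k * rs q (Suc N - 2 * k) x
        + q ^ (m - k) * (1 - q ^ (n - k)) * a k * x ^ Suc k * rs q (Suc N - 2 * Suc k) x" for k
  proof (cases "k \<le> n \<and> k \<le> m")
    case True
    define j where "j = N - 2 * k"
    have index: "Suc N - 2 * k = Suc j" "Suc N - 2 * Suc k = j - 1"
      using True unfolding j_def N_def by (auto simp: Suc_diff_le)
    have "j = (m - k) + (n - k)"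
      using True unfolding j_def N_def by auto
    then have power: "q ^ j = q ^ (m - k) * q ^ (n - k)"
      by (simp add: power_add)
    show ?thesis
      unfolding j_def[symmetric] index rs_Suc[of j x] power by (simp add: algebra_simps)
  next
    case False
    then have "a k = 0"
      unfolding a_def by (intro rs_lin_coeff_eq_0) auto
    then show ?thesis
      by simp
  qed
  have "(1 + x) * rs_linearization q n m x - x * (1 - q ^ m) * rs_linearization q n (m - 1) x
      = (\<Sum>k\<le>m. a k * x ^ k * rs q (Suc N - 2 * k) x)
        + (\<Sum>k\<le>m. q ^ (m - k) * (1 - q ^ (n - k)) * a k * x ^ Suc k * rs q (Suc N - 2 * Suc k) x)"
    unfolding mult.assoc[of x "1 - q ^ m"] rs_linearization_pred
    unfolding rs_linearization_def a_def[symmetric] N_def[symmetric] sum_distrib_left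
    unfolding sum_subtractf[symmetric] summand sum.distrib ..
  also have "(\<Sum>k\<le>m. a k * x ^ k * rs q (Suc N - 2 * k) x)
      = rs q (Suc N) x + (\<Sum>k\<le>m. a (Suc k) * x ^ Suc k * rs q (Suc N - 2 * Suc k) x)"
  proof -
    have "a (Suc m) = 0"
      by (simp add: a_def rs_lin_coeff_eq_0)
    then have "(\<Sum>k\<le>m. a k * x ^ k * rs q (Suc N - 2 * k) x)
        = (\<Sum>k\<le>Suc m. a k * x ^ k * rs q (Suc N - 2 * k) x)"
      by simp
    then show ?thesis
      unfolding sum.atMost_Suc_shift by (simp add: a_def)
  qed
  also have "rs q (Suc N) x + (\<Sum>k\<le>m. a (Suc k) * x ^ Suc k * rs q (Suc N - 2 * Suc k) x)
      + (\<Sum>k\<le>m. q ^ (m - k) * (1 - q ^ (n - k)) * a k * x ^ Suc k * rs q (Suc N - 2 * Suc k) x)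
      = rs_linearization q n (Suc m) x"
  proof -
    have "rs_linearization q n (Suc m) x = rs q (Suc N) x
        + (\<Sum>k\<le>m. rs_lin_coeff q n (Suc m) (Suc k) * x ^ Suc k * rs q (Suc N - 2 * Suc k) x)"
      unfolding rs_linearization_def sum.atMost_Suc_shift by (simp add: N_def)
    then show ?thesis
      by (simp only: rs_lin_coeff_Suc_Suc a_def distrib_right sum.distrib add.assoc)
  qed
  finally show ?thesis ..
qed

lemma rs_mult_rs_eq_linearization: "rs q n x * rs q m x = rs_linearization q n m x"
proof -
  have "rs q n x * rs q m x = rs_linearization q n m x
      \<and> rs q n x * rs q (m - 1) x = rs_linearization q n (m - 1) x"
  proof (induction m)
    case (Suc m)
    then show ?case
      by (simp add: rs_Suc[of m] rs_linearization_Suc algebra_simps)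
  qed simp
  then show ?thesis ..
qed

end

theorem corollary3p5:
  fixes q x y :: complex and n m :: nat
  assumes "norm q < 1"
  shows "(\<Sum>k=0..min n m. qbinom q n k * qbinom q m k * qpoch q q k * x ^ k
            * rs q (n + m - 2 * k) x)
       = (\<Sum>k=0..n. qbinom q n k * y ^ k * rs2 q (n - k) x y)
         * (\<Sum>j=0..m. qbinom q m j * y ^ j * rs2 q (m - j) x y)"
proof -
  have not_root_of_unity: "q ^ j \<noteq> 1" if "0 < j" for j
  proof -
    have "norm (q ^ j) < 1"
      using assms that by (simp add: norm_power power_less_one_iff)
    then show ?thesis
      by auto
  qed
  have "(\<Sum>k=0..min n m. qbinom q n k * qbinom q m k * qpoch q q k * x ^ k * rs q (n + m - 2 * k) x)
      = rs_linearization q n m x"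
    unfolding rs_linearization_def rs_lin_coeff_def
    by (rule sum.mono_neutral_cong_left) (auto simp: qbinomial_def)
  also have "\<dots> = rs q n x * rs q m x"
    by (rule rs_mult_rs_eq_linearization[OF not_root_of_unity, symmetric])
  finally show ?thesis
    by (simp only: sum_qbinom_rs2_eq_rs[OF not_root_of_unity])
qed

end
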